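(* Let $N=(V,E,c)$ be a network with $c_{\min}=\inf_{x\in V}c(x)>0$, fix $o\in V$ and $\gamma\in\mathbb{R}$, and let $K(x)=c(x)\min\{1,\langle x\rangle^{-2}(\log\langle x\rangle)^\gamma\}$. Let $X=(X_n)_{n\geq0}$ be the random walk on $N$ started at $x\in V$, and let $\tau_\dagger$ be the killing time of the coupled walk on $(V,E,c,K)$, so that conditionally on $X$, $\mathbf{P}_x(\tau_\dagger>n\mid X)=\prod_{i=0}^{n-1}\Big(1-\frac{K(X_i)}{c(X_i)+K(X_i)}\Big)$. Let $r>0$ and let $\mathscr{S}_r$ be the event that $\liminf_{n\to\infty}\frac{d(o,X_n)}{n^{1/2}(\log n)^r}>0$. If $\gamma+1<2r$, then $\mathbf{P}_x(\tau_\dagger=\infty\mid X)>0$ almost surely on the event $\mathscr{S}_r$.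
   Context: A network $(V,E,c)$ has conductances $c:E\to(0,\infty)$; $c(u)$ is the total conductance of oriented edges emanating from $u$, $c(u,v)$ that of oriented edges from $u$ to $v$, and the random walk on $N$ has transitions $c(u,v)/c(u)$. $d$ is the graph distance and $\langle x\rangle=2\vee d(o,x)$. The random walk on the network with killing $(V,E,c,K)$ has $P(u,v)=c(u,v)/(c(u)+K(u))$ and $P(u,\dagger)=K(u)/(c(u)+K(u))$; it is coupled with $X$ so that the two coincide until the killing time $\tau_\dagger$ (the first time the killed walk is at $\dagger$), with killing at each step from $X_i$ occurring independently given $X$ with probability $K(X_i)/(c(X_i)+K(X_i))$. *)

theory Defs
  imports "HOL-Probability.Probability"
begin

text \<open>A network on the countable vertex type 'v: c u v is the total conductance of
  oriented edges from u to v (0 if there is none).\<close>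

definition network :: "('v \<Rightarrow> 'v \<Rightarrow> real) \<Rightarrow> bool" where
  "network c \<longleftrightarrow> (\<forall>u v. c u v \<ge> 0) \<and> (\<forall>u v. c u v = c v u)
     \<and> (\<forall>u. c u summable_on UNIV) \<and> (\<forall>u v. (\<lambda>a b. c a b > 0)\<^sup>*\<^sup>* u v)"

definition cond :: "('v \<Rightarrow> 'v \<Rightarrow> real) \<Rightarrow> 'v \<Rightarrow> real" where
  "cond c u = (\<Sum>\<^sub>\<infinity>v. c u v)"

definition gdist :: "('v \<Rightarrow> 'v \<Rightarrow> real) \<Rightarrow> 'v \<Rightarrow> 'v \<Rightarrow> nat" where
  "gdist c u v = (LEAST k. ((\<lambda>a b. c a b > 0) ^^ k) u v)"

definition bracket :: "('v \<Rightarrow> 'v \<Rightarrow> real) \<Rightarrow> 'v \<Rightarrow> 'v \<Rightarrow> real" where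
  "bracket c o' x = max 2 (real (gdist c o' x))"

definition killing :: "('v \<Rightarrow> 'v \<Rightarrow> real) \<Rightarrow> 'v \<Rightarrow> real \<Rightarrow> 'v \<Rightarrow> real" where
  "killing c o' \<gamma> x = cond c x * min 1 ((bracket c o' x) powr (-2) * (ln (bracket c o' x)) powr \<gamma>)"

definition trans_prob :: "('v \<Rightarrow> 'v \<Rightarrow> real) \<Rightarrow> 'v \<Rightarrow> 'v \<Rightarrow> real" where
  "trans_prob c u v = c u v / cond c u"

definition is_random_walk :: "'a measure \<Rightarrow> ('v \<Rightarrow> 'v \<Rightarrow> real) \<Rightarrow> 'v \<Rightarrow> (nat \<Rightarrow> 'a \<Rightarrow> 'v) \<Rightarrow> bool" where
  "is_random_walk M c x X \<longleftrightarrow> prob_space M \<and>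
     (\<forall>i. X i \<in> measurable M (count_space UNIV)) \<and>
     (\<forall>n (v :: nat \<Rightarrow> 'v). measure M {\<omega> \<in> space M. \<forall>i\<le>n. X i \<omega> = v i}
        = (if v 0 = x then (\<Prod>i<n. trans_prob c (v i) (v (Suc i))) else 0))"

text \<open>P(tau = infinity | X) along a path: limit of the (decreasing) survival products\<close>
definition survival :: "('v \<Rightarrow> 'v \<Rightarrow> real) \<Rightarrow> ('v \<Rightarrow> real) \<Rightarrow> (nat \<Rightarrow> 'v) \<Rightarrow> real" where
  "survival c K p = lim (\<lambda>n. \<Prod>i<n. (1 - K (p i) / (cond c (p i) + K (p i))))"

end

theory Submission
  imports Defs "HOL-Real_Asymp.Real_Asymp"
begin

text \<open>On \<open>\<S>\<^sub>r\<close> there is \<open>z > 0\<close> with \<open>d(o, X n) \<ge> t n = z \<surd>n (log n)^r\<close> for all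
  large n. The killing probability at \<open>X n\<close> is at most \<open>\<langle>X n\<rangle>^-2 (log \<langle>X n\<rangle>)^\<gamma>\<close>, and since
  \<open>u^-2 (log u)^\<gamma>\<close> is eventually decreasing in u, this is at most
  \<open>(t n)^-2 (log (t n))^\<gamma> = O(1 / (n (log n)^(2r - \<gamma>)))\<close>, a Bertrand series that converges
  because \<open>2r - \<gamma> > 1\<close>. Summable killing probabilities make the survival product converge to
  a positive limit. The argument is pathwise.\<close>

lemma summable_ln_powr_neg_div:
  fixes s :: real
  assumes s: "s > 1"
  shows "summable (\<lambda>n. ln (real n) powr (-s) / real n)"
proof -
  define f where "f n = ln (max 2 (real n)) powr (-s) / max 2 (real n)" for n :: nat
  have f_nonneg: "f n \<ge> 0" for n
    unfolding f_def by simp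
  have f_antimono: "f (Suc n) \<le> f n" for n
  proof -
    have "ln (max 2 (real (Suc n))) powr (-s) \<le> ln (max 2 (real n)) powr (-s)"
      using s by (intro powr_mono2') auto
    then show ?thesis
      unfolding f_def by (intro frac_le) auto
  qed
  have condensed: "2 ^ k * f (2 ^ k) = ln 2 powr (-s) * real k powr (-s)" if "k \<ge> 1" for k
  proof -
    have "(2::real) \<le> 2 ^ k"
      using that by (metis power_one_right power_increasing one_le_numeral)
    then show ?thesis
      unfolding f_def by (simp add: ln_realpow powr_mult)
  qed
  have "summable (\<lambda>k. ln 2 powr (-s) * real k powr (-s))"
    using s by (intro summable_mult) (simp add: summable_real_powr_iff)
  moreover have "eventually (\<lambda>k. 2 ^ k * f (2 ^ k) = ln 2 powr (-s) * real k powr (-s)) sequentially"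
    using eventually_ge_at_top[of 1] by (rule eventually_mono) (rule condensed)
  ultimately have "summable (\<lambda>k. 2 ^ k * f (2 ^ k))"
    using summable_cong by fastforce
  then have "summable f"
    using condensation_test[of f] f_antimono f_nonneg by blast
  then show ?thesis
    by (rule summable_comparison_test'[where N = 2]) (simp add: f_def max_def)
qed

text \<open>For \<open>\<gamma> > 0\<close> write \<open>t\<^sup>-\<^sup>2 (ln t)\<^sup>\<gamma> = (ln u / (a u))\<^sup>\<gamma>\<close> with \<open>a = 2/\<gamma>\<close>, \<open>u = t\<^sup>a\<close>,
  and use that \<open>ln u / u\<close> decreases for \<open>u \<ge> e\<close>.\<close>

lemma powr_neg2_ln_powr_antimono:
  fixes \<gamma> s t :: real
  assumes s: "exp 1 \<le> s" and \<gamma>: "\<gamma> \<le> 2 * ln s" and st: "s \<le> t"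
  shows "t powr (-2) * ln t powr \<gamma> \<le> s powr (-2) * ln s powr \<gamma>"
proof -
  have s_pos: "s > 0"
    using s exp_gt_zero[of 1] by linarith
  have "ln s \<ge> 1"
    using s s_pos by (simp add: ln_ge_iff)
  have ln_pos: "0 < ln s" "ln s \<le> ln t"
    using \<open>ln s \<ge> 1\<close> st s_pos by (linarith, simp)
  show ?thesis
  proof (cases "\<gamma> \<le> 0")
    case True
    have "t powr (-2) \<le> s powr (-2)" "ln t powr \<gamma> \<le> ln s powr \<gamma>"
      using s_pos st ln_pos True by (auto intro: powr_mono2')
    then show ?thesis
      by (intro mult_mono) auto
  next
    case False
    define a where "a = 2 / \<gamma>"
    have a_pos: "a > 0"
      using False by (simp add: a_def)
    have rewrite: "x powr (-2) * ln x powr \<gamma> = (ln (x powr a) / x powr a / a) powr \<gamma>"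
      if "x \<ge> s" for x
    proof -
      have "x > 0" "ln x > 0"
        using that s_pos ln_pos by auto
      then show ?thesis
        using False a_pos
        by (simp add: ln_powr powr_divide powr_powr a_def powr_minus_divide)
    qed
    have "exp 1 \<le> s powr a"
    proof -
      have "1 \<le> a * ln s"
        using \<gamma> False by (simp add: a_def field_simps)
      then show ?thesis
        using s_pos by (simp add: powr_def)
    qed
    moreover have "s powr a \<le> t powr a"
      using s_pos st a_pos by (intro powr_mono2) auto
    ultimately have "ln (t powr a) / t powr a \<le> ln (s powr a) / s powr a"
      by (rule ln_x_over_x_mono)
    then have "(ln (t powr a) / t powr a / a) powr \<gamma> \<le> (ln (s powr a) / s powr a / a) powr \<gamma>"
      using a_pos False s_pos st ln_pos
      by (intro powr_mono2 divide_right_mono) (auto simp: ln_powr)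
    then show ?thesis
      using rewrite[of s] rewrite[of t] st by simp
  qed
qed

lemma lim_prod_one_minus_pos:
  fixes b :: "nat \<Rightarrow> real"
  assumes nonneg: "\<And>i. 0 \<le> b i" and less_one: "\<And>i. b i < 1" and summable: "summable b"
  shows "lim (\<lambda>n. \<Prod>i<n. 1 - b i) > 0"
proof -
  have "summable (\<lambda>i. norm ((1 - b i) - 1))"
    using summable nonneg by simp
  then have "convergent_prod (\<lambda>i. 1 - b i)"
    by (intro abs_convergent_prod_imp_convergent_prod summable_imp_abs_convergent_prod)
  then obtain L where L: "(\<lambda>n. \<Prod>i\<le>n. 1 - b i) \<longlonglongrightarrow> L" "L \<noteq> 0"
    using convergent_prod_iff_nz_lim[of "\<lambda>i. 1 - b i"] less_one by (metis diff_gt_0_iff_gt less_irrefl)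
  have "(\<lambda>n. \<Prod>i<Suc n. 1 - b i) \<longlonglongrightarrow> L"
    using L(1) by (simp add: lessThan_Suc_atMost)
  then have lim: "(\<lambda>n. \<Prod>i<n. 1 - b i) \<longlonglongrightarrow> L"
    by (rule LIMSEQ_imp_Suc)
  have "0 \<le> (\<Prod>i<n. 1 - b i)" for n
    using less_one by (intro prod_nonneg) (simp add: less_imp_le)
  then have "L \<ge> 0"
    using LIMSEQ_le_const[OF lim] by blast
  then show ?thesis
    using L(2) limI[OF lim] by simp
qed

lemma killing_ratio_bounds:
  assumes "cond c y > 0"
  shows "killing c o' \<gamma> y / (cond c y + killing c o' \<gamma> y) \<in> {0..<1}"
    and "killing c o' \<gamma> y / (cond c y + killing c o' \<gamma> y)
           \<le> bracket c o' y powr (-2) * ln (bracket c o' y) powr \<gamma>"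
proof -
  define m where "m = min 1 (bracket c o' y powr (-2) * ln (bracket c o' y) powr \<gamma>)"
  have "bracket c o' y \<ge> 2"
    by (simp add: bracket_def)
  then have m_nonneg: "m \<ge> 0"
    by (simp add: m_def)
  have "killing c o' \<gamma> y = cond c y * m"
    by (simp add: killing_def m_def)
  moreover have "cond c y + cond c y * m = cond c y * (1 + m)"
    by (simp add: algebra_simps)
  ultimately have ratio: "killing c o' \<gamma> y / (cond c y + killing c o' \<gamma> y) = m / (1 + m)"
    using assms by simp
  show "killing c o' \<gamma> y / (cond c y + killing c o' \<gamma> y) \<in> {0..<1}"
    unfolding ratio using m_nonneg by simp
  have "m / (1 + m) \<le> m"
    using m_nonneg by (simp add: divide_le_eq algebra_simps)
  then show "killing c o' \<gamma> y / (cond c y + killing c o' \<gamma> y)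
               \<le> bracket c o' y powr (-2) * ln (bracket c o' y) powr \<gamma>"
    unfolding ratio m_def by linarith
qed

lemma liminf_ratio_pos_imp_eventually_ge:
  fixes f g :: "nat \<Rightarrow> real"
  assumes "liminf (\<lambda>n. ereal (f n / g n)) > 0" and "eventually (\<lambda>n. g n > 0) sequentially"
  obtains z where "z > 0" and "eventually (\<lambda>n. z * g n \<le> f n) sequentially"
proof -
  obtain z where z: "0 < ereal z" "ereal z < liminf (\<lambda>n. ereal (f n / g n))"
    using ereal_dense2[OF assms(1)] by blast
  have "eventually (\<lambda>n. z * g n \<le> f n) sequentially"
    using less_LiminfD[OF z(2)] assms(2)
    by eventually_elim (simp add: pos_less_divide_eq less_imp_le)
  with z(1) show thesis
    using that by simp
qed

lemma summable_powr_neg2_ln_powr_of_eventually_ge: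
  fixes d :: "nat \<Rightarrow> real" and z r \<gamma> :: real
  assumes z: "z > 0" and r: "r > 0" and \<gamma>r: "\<gamma> + 1 < 2 * r"
    and d_ge: "eventually (\<lambda>n. z * (sqrt (real n) * ln (real n) powr r) \<le> d n) sequentially"
  shows "summable (\<lambda>n. max 2 (d n) powr (-2) * ln (max 2 (d n)) powr \<gamma>)"
proof -
  define g where "g u = u powr (-2) * ln u powr \<gamma>" for u :: real
  define t where "t n = z * sqrt (real n) * ln (real n) powr r" for n :: nat
  have "filterlim t at_top sequentially"
    unfolding t_def using z r by real_asymp
  then have "eventually (\<lambda>n. max (exp 1) (exp (\<gamma> / 2)) \<le> t n) sequentially"
    unfolding filterlim_at_top by blast
  then have t_large: "eventually (\<lambda>n. exp 1 \<le> t n \<and> \<gamma> \<le> 2 * ln (t n)) sequentially"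
  proof eventually_elim
    case (elim n)
    then have "t n > 0"
      using exp_gt_zero[of 1] by linarith
    with elim show ?case
      using ln_ge_iff[of "t n" "\<gamma> / 2"] by simp
  qed
  have "summable (\<lambda>n. g (t n))"
  proof (rule summable_comparison_test_bigo)
    show "summable (\<lambda>n. norm (ln (real n) powr (-(2 * r - \<gamma>)) / real n))"
      using summable_ln_powr_neg_div[of "2 * r - \<gamma>"] \<gamma>r by simp
    show "(\<lambda>n. g (t n)) \<in> O(\<lambda>n. ln (real n) powr (-(2 * r - \<gamma>)) / real n)"
      unfolding g_def t_def using z r by real_asymp
  qed
  moreover have "eventually (\<lambda>n. norm (g (max 2 (d n))) \<le> g (t n)) sequentially"
    using t_large d_ge
  proof eventually_elim
    case (elim n)
    have "t n \<le> max 2 (d n)"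
      using elim(2) by (simp add: t_def mult.assoc)
    then have "g (max 2 (d n)) \<le> g (t n)"
      unfolding g_def using elim by (intro powr_neg2_ln_powr_antimono) auto
    then show ?case
      by (simp add: g_def)
  qed
  ultimately show ?thesis
    unfolding g_def by (rule summable_comparison_test_ev[rotated])
qed

lemma survival_pos_of_liminf_pos:
  fixes c :: "'v \<Rightarrow> 'v \<Rightarrow> real" and p :: "nat \<Rightarrow> 'v" and \<gamma> r :: real
  assumes cond_pos: "\<And>y. cond c y > 0" and r: "r > 0" and \<gamma>r: "\<gamma> + 1 < 2 * r"
    and escape: "liminf (\<lambda>n. ereal (real (gdist c o' (p n)) / (sqrt (real n) * ln (real n) powr r))) > 0"
  shows "survival c (killing c o' \<gamma>) p > 0"
proof -
  define \<kappa> where "\<kappa> n = killing c o' \<gamma> (p n) / (cond c (p n) + killing c o' \<gamma> (p n))" for n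
  have \<kappa>_range: "\<kappa> n \<in> {0..<1}" for n
    using killing_ratio_bounds(1)[OF cond_pos] by (simp add: \<kappa>_def)
  have "eventually (\<lambda>n. sqrt (real n) * ln (real n) powr r > 0) sequentially"
    by real_asymp
  then obtain z where z: "z > 0"
    and dist_ge: "eventually (\<lambda>n. z * (sqrt (real n) * ln (real n) powr r) \<le> real (gdist c o' (p n))) sequentially"
    using liminf_ratio_pos_imp_eventually_ge[OF escape] by blast
  have "summable (\<lambda>n. bracket c o' (p n) powr (-2) * ln (bracket c o' (p n)) powr \<gamma>)"
    unfolding bracket_def by (rule summable_powr_neg2_ln_powr_of_eventually_ge[OF z r \<gamma>r dist_ge])
  moreover have "norm (\<kappa> n) \<le> bracket c o' (p n) powr (-2) * ln (bracket c o' (p n)) powr \<gamma>" for n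
  proof -
    have "\<kappa> n \<le> bracket c o' (p n) powr (-2) * ln (bracket c o' (p n)) powr \<gamma>"
      unfolding \<kappa>_def by (rule killing_ratio_bounds(2)[OF cond_pos])
    then show ?thesis
      using \<kappa>_range[of n] by simp
  qed
  ultimately have "summable \<kappa>"
    by (rule summable_comparison_test')
  then have "lim (\<lambda>n. \<Prod>i<n. 1 - \<kappa> i) > 0"
    using \<kappa>_range by (intro lim_prod_one_minus_pos) auto
  then show ?thesis
    by (simp add: survival_def \<kappa>_def)
qed

theorem lemma3p5:
  fixes c :: "'v::countable \<Rightarrow> 'v \<Rightarrow> real" and o' x :: 'v and \<gamma> r :: real
    and M :: "'a measure" and X :: "nat \<Rightarrow> 'a \<Rightarrow> 'v"
  assumes "network c"
    and "\<exists>cmin>0. \<forall>y. cond c y \<ge> cmin"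
    and "is_random_walk M c x X"
    and "r > 0"
    and "\<gamma> + 1 < 2 * r"
  shows "AE \<omega> in M.
           liminf (\<lambda>n. ereal (real (gdist c o' (X n \<omega>)) / (sqrt (real n) * ln (real n) powr r))) > 0
           \<longrightarrow> survival c (killing c o' \<gamma>) (\<lambda>n. X n \<omega>) > 0"
proof (intro AE_I2 impI)
  have "cond c y > 0" for y
    using assms(2) by (meson less_le_trans)
  then show "survival c (killing c o' \<gamma>) (\<lambda>n. X n \<omega>) > 0"
    if "liminf (\<lambda>n. ereal (real (gdist c o' (X n \<omega>)) / (sqrt (real n) * ln (real n) powr r))) > 0"
    for \<omega>
    by (rule survival_pos_of_liminf_pos[OF _ assms(4,5) that])
qed

end
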